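(* Let $n\in\mathbb{N}$, $\alpha,\beta>-1$, $\sigma:=\alpha+\beta+1$, and let $c_{ij}\equiv c_{ij}(n,\alpha,\beta)$ ($0\le i,j\le n$) be the B\'ezier coefficients of the dual Bernstein polynomials, i.e. $D^n_i(x;\alpha,\beta)=\sum_{j=0}^n c_{ij}B^n_j(x)$. Put \[ A(h):=(h-n)(h+\beta+1),\qquad B(h):=h(h-n-\alpha-1), \] and adopt the convention $c_{ij}:=0$ whenever $i$ or $j$ lies outside $\{0,\ldots,n\}$. Then for $0\le i\le n-1$ and $0\le j\le n$, \[ c_{i+1,j}=\frac{1}{A(i)}\Big\{(i-j)(2i+2j-2n-\alpha+\beta)\,c_{ij}+B(j)\,c_{i,j-1}+A(j)\,c_{i,j+1}-B(i)\,c_{i-1,j}\Big\}, \] and the first row is given by \[ c_{0j}=\frac{(\sigma+1)_n(\beta+2)_n}{n!\,B(\alpha+1,\beta+1)}\cdot\frac{(-1)^j}{(\alpha+1)_{n-j}(\beta+2)_j}\qquad(0\le j\le n). \]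
   Context: For $\alpha,\beta>-1$ define the inner product $\langle f,g\rangle:=\int_0^1(1-x)^{\alpha}x^{\beta}f(x)g(x)\,dx$. The Bernstein polynomials of degree $n$ are $B^n_i(x)=\binom ni x^i(1-x)^{n-i}$, $0\le i\le n$. The dual Bernstein polynomials $D^n_0(x;\alpha,\beta),\ldots,D^n_n(x;\alpha,\beta)$ are the unique polynomials of degree at most $n$ with $\langle D^n_i,B^n_j\rangle=\delta_{ij}$ for $i,j=0,\ldots,n$. Notation: $(c)_k:=\prod_{j=0}^{k-1}(c+j)$; $B(\lambda,\mu)=\Gamma(\lambda)\Gamma(\mu)/\Gamma(\lambda+\mu)$ (the beta function; not to be confused with the polynomial $B(h)$ defined in the claim). *)

theory Defs
  imports "HOL-Analysis.Analysis"
begin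

definition bern :: "nat \<Rightarrow> nat \<Rightarrow> real \<Rightarrow> real" where
  "bern n i x = real (n choose i) * x ^ i * (1 - x) ^ (n - i)"

definition jip :: "real \<Rightarrow> real \<Rightarrow> (real \<Rightarrow> real) \<Rightarrow> (real \<Rightarrow> real) \<Rightarrow> real" where
  "jip \<alpha> \<beta> f g = (LINT x:{0..1}|lborel. (1 - x) powr \<alpha> * x powr \<beta> * f x * g x)"

text \<open>Bezier coefficients c_ij of the dual Bernstein polynomials
  D_i = sum_j c_ij B_j, indexed by integers and extended by zero outside {0..n}.\<close>
definition dual_coeff :: "nat \<Rightarrow> real \<Rightarrow> real \<Rightarrow> int \<Rightarrow> int \<Rightarrow> real" where
  "dual_coeff n \<alpha> \<beta> = (THE c. (\<forall>i j. (i < 0 \<or> i > int n \<or> j < 0 \<or> j > int n) \<longrightarrow> c i j = 0) \<and>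
      (\<forall>i\<le>n. \<forall>k\<le>n. jip \<alpha> \<beta> (\<lambda>x. \<Sum>j\<le>n. c (int i) (int j) * bern n j x) (bern n k)
                      = (if i = k then 1 else 0)))"

end

theory Submission
  imports Defs "Jordan_Normal_Form.Determinant" "HOL-Computational_Algebra.Polynomial"
begin

(* Let G be the Gram matrix G_jk = <B_j, B_k> of the Bernstein basis of degree n.  Its entries are
   Beta integrals, G_jk = C(n,j) C(n,k) B(b+1+j+k, a+1+2n-j-k).  The quadratic form of G is the
   weighted L2-norm of a polynomial, so G is nonsingular, and the biorthogonality relations
   defining the dual Bernstein polynomials say exactly that the matrix C = (c_ij) is G^-1.
   (1) Recurrence.  Let L be the tridiagonal matrix with rows (A(k-1), d(k), B(k+1)), where
       d(h) = -2h^2 + (2n+a-b)h.  Using the Beta-function values one checks L G = G L^T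
       (L represents the Jacobi differential operator, which is symmetric for <.,.>).
       Hence C L = L^T C, and comparing the (i,j) entries gives the three-term recurrence.
   (2) First row.  The vector w_j = (-1)^j / ((a+1)_{n-j} (b+2)_j) satisfies w G = mu e_0:
       for k >= 1 the k-th entry is an n-th finite difference of a polynomial of degree < n,
       and the 0-th entry is an alternating binomial sum of reciprocals.  So row 0 of G^-1 is w/mu. *)

lemma Beta_shift:
  fixes x y :: real
  assumes x: "x > 0" and y: "y > 0"
  shows "Beta (x + real p) (y + real q) =
           Beta x y * pochhammer x p * pochhammer y q / pochhammer (x + y) (p + q)"
proof -
  have nonpos: "x \<notin> \<int>\<^sub>\<le>\<^sub>0" "y \<notin> \<int>\<^sub>\<le>\<^sub>0" "x + y \<notin> \<int>\<^sub>\<le>\<^sub>0"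
    using x y by (auto elim!: nonpos_Ints_cases)
  have pos: "Gamma x > 0" "Gamma y > 0" "Gamma (x + y) > 0" "Gamma (x + y + real (p + q)) > 0"
    using x y by auto
  have "x + real p + (y + real q) = x + y + real (p + q)" by simp
  then show ?thesis
    unfolding Beta_def pochhammer_Gamma[OF nonpos(1)] pochhammer_Gamma[OF nonpos(2)]
      pochhammer_Gamma[OF nonpos(3)]
    using pos by (simp add: field_simps)
qed

lemma Beta_unit_shifts:
  fixes x y :: real
  assumes "x > 0" "y > 0"
  shows "Beta x (y + 1) * x = Beta (x + 1) y * y"
  using Beta_shift[OF assms, of 0 1] Beta_shift[OF assms, of 1 0] by simp

lemma alternating_binomial_step:
  fixes f :: "nat \<Rightarrow> real"
  shows "(\<Sum>j\<le>Suc n. (-1) ^ j * real (Suc n choose j) * f j)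
       = (\<Sum>j\<le>n. (-1) ^ j * real (n choose j) * (f j - f (Suc j)))"
proof -
  define S1 where "S1 = (\<Sum>j\<le>n. (-1) ^ Suc j * real (n choose j) * f (Suc j))"
  define S2 where "S2 = (\<Sum>j\<le>n. (-1) ^ Suc j * real (n choose Suc j) * f (Suc j))"
  define T where "T = (\<Sum>j\<le>n. (-1) ^ j * real (n choose j) * f j)"
  have A: "(\<Sum>j\<le>Suc n. (-1) ^ j * real (Suc n choose j) * f j) = f 0 + (S1 + S2)"
    unfolding S1_def S2_def
    by (subst sum.atMost_Suc_shift) (simp add: sum.distrib[symmetric] algebra_simps)
  have B: "f 0 + S2 = T"
  proof -
    have "f 0 + S2 = (\<Sum>j\<le>Suc n. (-1) ^ j * real (n choose j) * f j)"
      unfolding S2_def by (subst sum.atMost_Suc_shift) simp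
    then show ?thesis unfolding T_def by simp
  qed
  have C: "S1 = - (\<Sum>j\<le>n. (-1) ^ j * real (n choose j) * f (Suc j))"
    unfolding S1_def by (simp add: sum_negf[symmetric])
  have "(\<Sum>j\<le>Suc n. (-1) ^ j * real (Suc n choose j) * f j)
      = T - (\<Sum>j\<le>n. (-1) ^ j * real (n choose j) * f (Suc j))"
    using A B C by simp
  then show ?thesis
    unfolding T_def by (simp add: sum_subtractf[symmetric] algebra_simps)
qed

lemma degree_forward_difference:
  fixes p :: "real poly"
  assumes "degree p > 0"
  shows "degree (p - pcompose p [:1, 1:]) < degree p"
proof -
  let ?q = "pcompose p [:1, 1:]"
  have dq: "degree ?q = degree p" by (simp add: degree_pcompose)
  have le: "degree (p - ?q) \<le> degree p" using dq by (metis max.idem degree_diff_le_max)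
  have "lead_coeff ?q = lead_coeff p" by (simp add: lead_coeff_comp)
  then have "coeff (p - ?q) (degree p) = 0" using dq by simp
  then have "p - ?q = 0 \<or> degree (p - ?q) \<noteq> degree p" by (metis leading_coeff_0_iff)
  then show ?thesis using le assms by auto
qed

lemma finite_difference_poly:
  fixes p :: "real poly"
  assumes "degree p < n"
  shows "(\<Sum>j\<le>n. (-1) ^ j * real (n choose j) * poly p (real j)) = 0"
  using assms
proof (induction n arbitrary: p)
  case 0 then show ?case by simp
next
  case (Suc n)
  have "(\<Sum>j\<le>Suc n. (-1) ^ j * real (Suc n choose j) * poly p (real j))
      = (\<Sum>j\<le>n. (-1) ^ j * real (n choose j) * poly (p - pcompose p [:1, 1:]) (real j))"
    unfolding alternating_binomial_step by (simp add: poly_pcompose algebra_simps)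
  also have "\<dots> = 0"
  proof (cases "degree p = 0")
    case True
    then obtain c where "p = [:c:]" by (metis degree_eq_zeroE)
    then show ?thesis by simp
  next
    case False
    then have "degree (p - pcompose p [:1, 1:]) < n"
      using degree_forward_difference[of p] Suc.prems by simp
    then show ?thesis by (rule Suc.IH)
  qed
  finally show ?case .
qed

lemma alternating_binomial_reciprocal:
  fixes x :: real
  assumes "x > 0"
  shows "(\<Sum>j\<le>n. (-1) ^ j * real (n choose j) * (1 / (x + real j))) = fact n / pochhammer x (Suc n)"
  using assms
proof (induction n arbitrary: x)
  case 0 then show ?case by simp
next
  case (Suc n)
  define P where "P = pochhammer x (Suc n)"
  define Q where "Q = pochhammer (x + 1) (Suc n)"
  have P: "P > 0" and Q: "Q > 0" using Suc.prems by (auto simp: P_def Q_def intro!: pochhammer_pos)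
  have PQ: "P * (x + real (Suc n)) = x * Q"
    unfolding P_def Q_def by (metis pochhammer_Suc pochhammer_rec)
  have "(\<Sum>j\<le>Suc n. (-1) ^ j * real (Suc n choose j) * (1 / (x + real j)))
      = (\<Sum>j\<le>n. (-1) ^ j * real (n choose j) * (1 / (x + real j)))
        - (\<Sum>j\<le>n. (-1) ^ j * real (n choose j) * (1 / ((x + 1) + real j)))"
    unfolding alternating_binomial_step by (simp add: sum_subtractf[symmetric] algebra_simps)
  also have "\<dots> = fact n / P - fact n / Q"
    using Suc.IH[of x] Suc.IH[of "x + 1"] Suc.prems by (simp add: P_def Q_def)
  also have "\<dots> = fact n * (x * Q - x * P) / (x * P * Q)"
    using P Q Suc.prems by (simp add: field_simps)
  also have "x * Q - x * P = P * (real n + 1)"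
    using PQ by (simp add: algebra_simps)
  also have "fact n * (P * (real n + 1)) / (x * P * Q) = fact (Suc n) / (x * Q)"
    using P Q Suc.prems by (simp add: field_simps)
  also have "x * Q = pochhammer x (Suc (Suc n))" unfolding Q_def by (simp add: pochhammer_rec)
  finally show ?case .
qed

lemma pochhammer_affine_poly:
  fixes c s :: real
  obtains P :: "real poly" where "degree P \<le> m" "\<And>x. poly P x = pochhammer (c + s * x) m"
proof
  let ?P = "\<Prod>i<m. [:c + real i, s:]"
  have "degree ?P \<le> (\<Sum>i<m. degree [:c + real i, s:])"
    using degree_prod_sum_le[of "{..<m}" "\<lambda>i. [:c + real i, s:]"] by (simp add: o_def)
  also have "\<dots> \<le> (\<Sum>i<m. 1)" by (intro sum_mono) simp
  finally show "degree ?P \<le> m" by simp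
  show "poly ?P x = pochhammer (c + s * x) m" for x
    by (simp add: poly_prod pochhammer_prod atLeast0LessThan algebra_simps)
qed

lemma set_integral_finite_sum:
  fixes f :: "'i \<Rightarrow> real \<Rightarrow> real"
  assumes "finite I" "\<And>i. i \<in> I \<Longrightarrow> set_integrable M A (f i)"
  shows "set_integrable M A (\<lambda>x. \<Sum>i\<in>I. f i x)"
    and "(LINT x:A|M. (\<Sum>i\<in>I. f i x)) = (\<Sum>i\<in>I. LINT x:A|M. f i x)"
proof -
  have eq: "(\<lambda>x. indicator A x *\<^sub>R (\<Sum>i\<in>I. f i x)) = (\<lambda>x. \<Sum>i\<in>I. indicator A x *\<^sub>R f i x)"
    by (simp add: sum_distrib_left)
  show "set_integrable M A (\<lambda>x. \<Sum>i\<in>I. f i x)"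
    using assms unfolding set_integrable_def eq by (intro Bochner_Integration.integrable_sum) auto
  show "(LINT x:A|M. (\<Sum>i\<in>I. f i x)) = (\<Sum>i\<in>I. LINT x:A|M. f i x)"
    using assms unfolding set_integrable_def set_lebesgue_integral_def eq
    by (intro Bochner_Integration.integral_sum) auto
qed

lemma nonneg_zero_integral_vanishes:
  fixes g :: "real \<Rightarrow> real"
  assumes int: "g integrable_on {0..1}" and zero: "integral {0..1} g = 0"
    and nonneg: "\<And>x. x \<in> {0..1} \<Longrightarrow> 0 \<le> g x" and cont: "continuous_on {0<..<1} g"
    and x: "0 < x" "x < 1"
  shows "g x = 0"
proof -
  define lo where "lo = x / 2"
  define hi where "hi = (1 + x) / 2"
  have lohi: "0 < lo" "lo < x" "x < hi" "hi < 1" using x by (auto simp: lo_def hi_def)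
  have sub: "{lo..hi} \<subseteq> {0..1}" using lohi by auto
  have int_sub: "g integrable_on {lo..hi}" by (rule integrable_on_subinterval[OF int sub])
  have "integral {lo..hi} g \<le> integral {0..1} g"
    using sub int_sub int nonneg by (intro integral_subset_le) auto
  moreover have "integral {lo..hi} g \<ge> 0"
    using int_sub nonneg sub by (intro integral_nonneg) auto
  ultimately have "integral {lo..hi} g = 0" using zero by simp
  then have hint: "(g has_integral 0) (cbox lo hi)"
    using int_sub by (metis cbox_interval has_integral_integral)
  have cont_sub: "continuous_on (cbox lo hi) g"
    using lohi by (intro continuous_on_subset[OF cont]) auto
  show "g x = 0"
    by (rule has_integral_0_cbox_imp_0[OF cont_sub _ hint]) (use lohi nonneg in auto)
qed

lemma jacobi_monomial_integral:
  fixes a b :: real and p q :: nat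
  assumes a: "a > -1" and b: "b > -1"
  shows "set_integrable lborel {0..1} (\<lambda>x. (1 - x) powr a * x powr b * (x ^ p * (1 - x) ^ q))"
    and "(LINT x:{0..1}|lborel. (1 - x) powr a * x powr b * (x ^ p * (1 - x) ^ q))
           = Beta (b + 1 + real p) (a + 1 + real q)"
proof -
  have eq: "(1 - x) powr a * x powr b * (x ^ p * (1 - x) ^ q)
              = x powr (b + 1 + real p - 1) * (1 - x) powr (a + 1 + real q - 1)"
    if "x \<in> {0..1}" for x
  proof (cases "x = 0 \<or> x = 1")
    case True then show ?thesis by auto
  next
    case False
    then have "0 < x" "x < 1" using that by auto
    then show ?thesis by (simp add: powr_add powr_realpow[symmetric])
  qed
  have I: "set_integrable lborel {0..1}
             (\<lambda>x. x powr (b + 1 + real p - 1) * (1 - x) powr (a + 1 + real q - 1))"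
    by (rule integrable_Beta) (use a b in auto)
  show "set_integrable lborel {0..1} (\<lambda>x. (1 - x) powr a * x powr b * (x ^ p * (1 - x) ^ q))"
    by (rule set_integrable_cong[THEN iffD1, OF refl refl _ I]) (simp add: eq)
  have "(LINT x:{0..1}|lborel. (1 - x) powr a * x powr b * (x ^ p * (1 - x) ^ q))
      = (LINT x:{0..1}|lborel. x powr (b + 1 + real p - 1) * (1 - x) powr (a + 1 + real q - 1))"
    by (rule set_lebesgue_integral_cong) (auto simp: eq)
  also have "\<dots> = integral {0..1} (\<lambda>x. x powr (b + 1 + real p - 1) * (1 - x) powr (a + 1 + real q - 1))"
    by (rule set_borel_integral_eq_integral(2)[OF I])
  also have "\<dots> = Beta (b + 1 + real p) (a + 1 + real q)"
    by (rule integral_unique, rule has_integral_Beta_real) (use a b in auto)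
  finally show "(LINT x:{0..1}|lborel. (1 - x) powr a * x powr b * (x ^ p * (1 - x) ^ q))
           = Beta (b + 1 + real p) (a + 1 + real q)" .
qed

lemma bern_mult:
  assumes "j \<le> n" "k \<le> n"
  shows "bern n j x * bern n k x
           = real (n choose j) * real (n choose k) * (x ^ (j + k) * (1 - x) ^ (2 * n - (j + k)))"
proof -
  have "2 * n - (j + k) = (n - j) + (n - k)" using assms by auto
  then show ?thesis by (simp add: bern_def power_add algebra_simps)
qed

lemma bern_partition_of_unity: "(\<Sum>k\<le>n. bern n k x) = 1"
  using binomial_ring[of x "1 - x" n] by (simp add: bern_def)

lemma bern_at_ratio:
  fixes t :: real
  assumes t: "t > 0" and k: "k \<le> n"
  shows "bern n k (t / (1 + t)) = real (n choose k) * t ^ k / (1 + t) ^ n"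
proof -
  have 1: "1 - t / (1 + t) = 1 / (1 + t)" using t by (simp add: field_simps)
  have "(1 + t) ^ n = (1 + t) ^ k * (1 + t) ^ (n - k)"
    using k by (simp add: power_add[symmetric])
  then show ?thesis using t unfolding bern_def 1 by (simp add: power_divide field_simps)
qed

lemma bern_coeffs_zero:
  assumes zero: "\<And>x. 0 < x \<Longrightarrow> x < 1 \<Longrightarrow> (\<Sum>k\<le>n. v k * bern n k x) = 0" and k: "k \<le> n"
  shows "v k = 0"
proof -
  define c where "c k = v k * real (n choose k)" for k
  have root: "(\<Sum>k\<le>n. c k * t ^ k) = 0" if t: "t > 0" for t :: real
  proof -
    have "0 < t / (1 + t)" "t / (1 + t) < 1" using t by (auto simp: field_simps)
    then have "0 = (\<Sum>k\<le>n. v k * bern n k (t / (1 + t)))" using zero by simp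
    also have "\<dots> = (\<Sum>k\<le>n. c k * t ^ k) / (1 + t) ^ n"
      unfolding c_def using t by (simp add: bern_at_ratio sum_divide_distrib mult.assoc)
    finally show ?thesis using t by simp
  qed
  have "{0<..} \<subseteq> {t::real. (\<Sum>k\<le>n. c k * t ^ k) = 0}" using root by auto
  then have "infinite {t::real. (\<Sum>k\<le>n. c k * t ^ k) = 0}"
    using infinite_Ioi finite_subset by blast
  then have "c k = 0" using polyfun_finite_roots[of c n] k by blast
  then show "v k = 0" using k by (simp add: c_def)
qed

lemma sum_delta_mult:
  fixes f :: "nat \<Rightarrow> 'a::semiring_1"
  assumes "k \<le> n"
  shows "(\<Sum>l\<le>n. of_bool (l = k) * f l) = f k"
proof -
  have "(\<Sum>l\<le>n. of_bool (l = k) * f l) = (\<Sum>l\<le>n. if l = k then f l else 0)"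
    by (intro sum.cong) auto
  then show ?thesis using assms by (simp add: sum.delta')
qed

lemma mat_mult_entry:
  assumes "A \<in> carrier_mat r (Suc n)" "B \<in> carrier_mat (Suc n) c" "i < r" "k < c"
  shows "(A * B) $$ (i, k) = (\<Sum>j\<le>n. A $$ (i, j) * B $$ (j, k))"
proof -
  have "(A * B) $$ (i, k) = (\<Sum>j\<in>{0..<Suc n}. A $$ (i, j) * B $$ (j, k))"
    using assms by (simp add: scalar_prod_def)
  then show ?thesis by (simp add: atLeast0LessThan lessThan_Suc_atMost)
qed

lemma injective_mat_invertible:
  fixes A :: "'a::field mat"
  assumes A: "A \<in> carrier_mat n n"
    and inj: "\<And>v. v \<in> carrier_vec n \<Longrightarrow> A *\<^sub>v v = 0\<^sub>v n \<Longrightarrow> v = 0\<^sub>v n"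
  obtains X where "X \<in> carrier_mat n n" "X * A = 1\<^sub>m n" "A * X = 1\<^sub>m n"
proof -
  have "det A \<noteq> 0" using det_0_iff_vec_prod_zero_field[OF A] inj by blast
  then have "A \<in> Units (ring_mat TYPE('a) n ())" by (rule det_non_zero_imp_unit[OF A])
  then show ?thesis using that unfolding Units_def ring_mat_def by auto
qed

lemma inverse_intertwines_transpose:
  fixes X G L :: "'a::comm_ring_1 mat"
  assumes X: "X \<in> carrier_mat n n" and G: "G \<in> carrier_mat n n" and L: "L \<in> carrier_mat n n"
    and XG: "X * G = 1\<^sub>m n" and GX: "G * X = 1\<^sub>m n" and LG: "L * G = G * transpose_mat L"
  shows "X * L = transpose_mat L * X"
proof -
  have LT: "transpose_mat L \<in> carrier_mat n n" using L by simp
  have "X * L \<in> carrier_mat n n" using X L by simp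
  then have "X * L = (X * L) * (G * X)" by (simp add: GX right_mult_one_mat)
  also have "\<dots> = X * (L * G) * X"
    using X L G by (simp add: assoc_mult_mat[of _ n n _ n _ n])
  also have "\<dots> = X * (G * transpose_mat L) * X" by (simp add: LG)
  also have "\<dots> = (X * G) * transpose_mat L * X"
    using assoc_mult_mat[OF X G LT] by simp
  also have "\<dots> = transpose_mat L * X" using XG LT X by simp
  finally show ?thesis .
qed

lemma row_of_right_inverse:
  fixes G X :: "'a::field mat" and r :: "nat \<Rightarrow> 'a"
  assumes G: "G \<in> carrier_mat (Suc n) (Suc n)" and X: "X \<in> carrier_mat (Suc n) (Suc n)"
    and GX: "G * X = 1\<^sub>m (Suc n)"
    and r: "\<And>k. k \<le> n \<Longrightarrow> (\<Sum>j\<le>n. r j * G $$ (j, k)) = (if k = i then 1 else 0)"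
    and i: "i \<le> n" and m: "m \<le> n"
  shows "r m = X $$ (i, m)"
proof -
  have GX_entry: "(\<Sum>k\<le>n. G $$ (j, k) * X $$ (k, m)) = (if j = m then 1 else 0)" if "j \<le> n" for j
    using mat_mult_entry[OF G X, of j m] GX that m by simp
  have "X $$ (i, m) = (\<Sum>k\<le>n. (if k = i then X $$ (k, m) else 0))" using i by (simp add: sum.delta')
  also have "\<dots> = (\<Sum>k\<le>n. (\<Sum>j\<le>n. r j * G $$ (j, k)) * X $$ (k, m))"
    by (intro sum.cong) (auto simp: r)
  also have "\<dots> = (\<Sum>j\<le>n. r j * (\<Sum>k\<le>n. G $$ (j, k) * X $$ (k, m)))"
    by (simp add: sum_distrib_left sum_distrib_right mult.assoc) (rule sum.swap)
  also have "\<dots> = (\<Sum>j\<le>n. (if j = m then r j else 0))"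
    by (intro sum.cong) (auto simp: GX_entry)
  also have "\<dots> = r m" using m by (simp add: sum.delta')
  finally show ?thesis ..
qed

definition bern_moment :: "nat \<Rightarrow> real \<Rightarrow> real \<Rightarrow> nat \<Rightarrow> real" where
  "bern_moment n a b s = Beta (b + 1 + real s) (a + 1 + real (2 * n - s))"

definition gram :: "nat \<Rightarrow> real \<Rightarrow> real \<Rightarrow> nat \<Rightarrow> nat \<Rightarrow> real" where
  "gram n a b j k = real (n choose j) * real (n choose k) * bern_moment n a b (j + k)"

definition gram_mat :: "nat \<Rightarrow> real \<Rightarrow> real \<Rightarrow> real mat" where
  "gram_mat n a b = mat (Suc n) (Suc n) (\<lambda>(j, k). gram n a b j k)"

definition coeff_mat :: "nat \<Rightarrow> (int \<Rightarrow> int \<Rightarrow> real) \<Rightarrow> real mat" where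
  "coeff_mat n c = mat (Suc n) (Suc n) (\<lambda>(i, j). c (int i) (int j))"

definition dual_spec :: "nat \<Rightarrow> real \<Rightarrow> real \<Rightarrow> (int \<Rightarrow> int \<Rightarrow> real) \<Rightarrow> bool" where
  "dual_spec n a b c \<longleftrightarrow>
     (\<forall>i j. (i < 0 \<or> i > int n \<or> j < 0 \<or> j > int n) \<longrightarrow> c i j = 0) \<and>
     (\<forall>i\<le>n. \<forall>k\<le>n. jip a b (\<lambda>x. \<Sum>j\<le>n. c (int i) (int j) * bern n j x) (bern n k)
                     = (if i = k then 1 else 0))"

lemma dual_coeff_THE: "dual_coeff n a b = (THE c. dual_spec n a b c)"
  unfolding dual_coeff_def dual_spec_def ..

lemma gram_sym: "gram n a b j k = gram n a b k j"
  by (simp add: gram_def add.commute)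

lemma gram_mat_carrier: "gram_mat n a b \<in> carrier_mat (Suc n) (Suc n)"
  by (simp add: gram_mat_def)

lemma coeff_mat_carrier: "coeff_mat n c \<in> carrier_mat (Suc n) (Suc n)"
  by (simp add: coeff_mat_def)

context
  fixes n :: nat and a b :: real
  assumes a: "a > -1" and b: "b > -1"
begin

lemma jip_bern_pair:
  assumes "j \<le> n" "k \<le> n"
  shows "set_integrable lborel {0..1} (\<lambda>x. (1 - x) powr a * x powr b * bern n j x * bern n k x)"
    and "(LINT x:{0..1}|lborel. (1 - x) powr a * x powr b * bern n j x * bern n k x) = gram n a b j k"
proof -
  have eq: "(1 - x) powr a * x powr b * bern n j x * bern n k x = real (n choose j) * real (n choose k) *
              ((1 - x) powr a * x powr b * (x ^ (j + k) * (1 - x) ^ (2 * n - (j + k))))" for x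
    using bern_mult[OF assms, of x] by (simp add: algebra_simps)
  show "set_integrable lborel {0..1} (\<lambda>x. (1 - x) powr a * x powr b * bern n j x * bern n k x)"
    unfolding eq using jacobi_monomial_integral(1)[OF a b] by (intro set_integrable_mult_right)
  show "(LINT x:{0..1}|lborel. (1 - x) powr a * x powr b * bern n j x * bern n k x) = gram n a b j k"
    unfolding eq gram_def bern_moment_def by (simp add: jacobi_monomial_integral(2)[OF a b])
qed

lemma bern_expansions_integrable:
  "set_integrable lborel {0..1}
     (\<lambda>x. (1 - x) powr a * x powr b * (\<Sum>j\<le>n. u j * bern n j x) * (\<Sum>k\<le>n. v k * bern n k x))"
proof -
  have eq: "(1 - x) powr a * x powr b * (\<Sum>j\<le>n. u j * bern n j x) * (\<Sum>k\<le>n. v k * bern n k x)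
     = (\<Sum>j\<le>n. \<Sum>k\<le>n. u j * v k * ((1 - x) powr a * x powr b * bern n j x * bern n k x))" for x
    by (simp add: sum_distrib_left sum_distrib_right algebra_simps)
  show ?thesis
    unfolding eq using jip_bern_pair(1)
    by (intro set_integral_finite_sum(1) set_integrable_mult_right) auto
qed

lemma jip_bern_expansions:
  "jip a b (\<lambda>x. \<Sum>j\<le>n. u j * bern n j x) (\<lambda>x. \<Sum>k\<le>n. v k * bern n k x)
     = (\<Sum>j\<le>n. \<Sum>k\<le>n. u j * v k * gram n a b j k)"
proof -
  define h where "h j k x = u j * v k * ((1 - x) powr a * x powr b * bern n j x * bern n k x)" for j k x
  have eq: "(1 - x) powr a * x powr b * (\<Sum>j\<le>n. u j * bern n j x) * (\<Sum>k\<le>n. v k * bern n k x)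
     = (\<Sum>j\<le>n. \<Sum>k\<le>n. h j k x)" for x
    unfolding h_def by (simp add: sum_distrib_left sum_distrib_right algebra_simps)
  have h_int: "set_integrable lborel {0..1} (h j k)" if "j \<le> n" "k \<le> n" for j k
    unfolding h_def using jip_bern_pair(1) that by (intro set_integrable_mult_right) auto
  have h_val: "(LINT x:{0..1}|lborel. h j k x) = u j * v k * gram n a b j k" if "j \<le> n" "k \<le> n" for j k
    unfolding h_def using jip_bern_pair(2) that by simp
  have "jip a b (\<lambda>x. \<Sum>j\<le>n. u j * bern n j x) (\<lambda>x. \<Sum>k\<le>n. v k * bern n k x)
      = (LINT x:{0..1}|lborel. (\<Sum>j\<le>n. \<Sum>k\<le>n. h j k x))"
    unfolding jip_def eq ..
  also have "\<dots> = (\<Sum>j\<le>n. LINT x:{0..1}|lborel. (\<Sum>k\<le>n. h j k x))"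
    using h_int by (intro set_integral_finite_sum) (auto intro!: set_integral_finite_sum(1))
  also have "\<dots> = (\<Sum>j\<le>n. \<Sum>k\<le>n. LINT x:{0..1}|lborel. h j k x)"
    using h_int by (intro sum.cong refl set_integral_finite_sum(2)) auto
  also have "\<dots> = (\<Sum>j\<le>n. \<Sum>k\<le>n. u j * v k * gram n a b j k)"
    using h_val by (intro sum.cong refl) auto
  finally show ?thesis .
qed

lemma jip_bern_expansion_basis:
  assumes "k \<le> n"
  shows "jip a b (\<lambda>x. \<Sum>j\<le>n. u j * bern n j x) (bern n k) = (\<Sum>j\<le>n. u j * gram n a b j k)"
proof -
  have "bern n k = (\<lambda>x. \<Sum>l\<le>n. of_bool (l = k) * bern n l x)"
    using assms by (simp add: sum_delta_mult)
  then have "jip a b (\<lambda>x. \<Sum>j\<le>n. u j * bern n j x) (bern n k)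
      = (\<Sum>j\<le>n. u j * (\<Sum>l\<le>n. of_bool (l = k) * gram n a b j l))"
    by (simp only: jip_bern_expansions mult.assoc sum_distrib_left)
  also have "\<dots> = (\<Sum>j\<le>n. u j * gram n a b j k)"
    using assms by (simp only: sum_delta_mult)
  finally show ?thesis .
qed

(* The Gram matrix is positive definite: a vector in its kernel gives a Bernstein expansion
   of weighted L2-norm zero, which must vanish on (0,1). *)
lemma gram_definite:
  assumes kernel: "\<And>j. j \<le> n \<Longrightarrow> (\<Sum>k\<le>n. gram n a b j k * v k) = 0" and k: "k \<le> n"
  shows "v k = 0"
proof -
  define f where "f x = (\<Sum>k\<le>n. v k * bern n k x)" for x
  define g where "g x = (1 - x) powr a * x powr b * f x * f x" for x
  have "jip a b f f = (\<Sum>j\<le>n. v j * (\<Sum>k\<le>n. gram n a b j k * v k))"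
    unfolding f_def jip_bern_expansions by (simp add: sum_distrib_left mult_ac)
  then have norm_zero: "jip a b f f = 0" using kernel by simp
  have g_int: "set_integrable lborel {0..1} g"
    unfolding g_def f_def by (rule bern_expansions_integrable)
  have "jip a b f f = integral {0..1} g"
    unfolding jip_def g_def[symmetric] by (rule set_borel_integral_eq_integral(2)[OF g_int])
  then have "g integrable_on {0..1}" "integral {0..1} g = 0"
    using set_borel_integral_eq_integral(1)[OF g_int] norm_zero by auto
  moreover have "0 \<le> g x" for x
    unfolding g_def by (metis mult.assoc mult_nonneg_nonneg powr_ge_zero zero_le_square)
  moreover have "continuous_on {0<..<1} g"
    unfolding g_def f_def bern_def by (intro continuous_intros) auto
  ultimately have "g x = 0" if "0 < x" "x < 1" for x
    using nonneg_zero_integral_vanishes that by blast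
  then have "f x = 0" if "0 < x" "x < 1" for x
    using that by (simp add: g_def)
  then show "v k = 0" using bern_coeffs_zero k unfolding f_def by blast
qed

lemma gram_mat_invertible:
  obtains X where "X \<in> carrier_mat (Suc n) (Suc n)"
    "X * gram_mat n a b = 1\<^sub>m (Suc n)" "gram_mat n a b * X = 1\<^sub>m (Suc n)"
proof (rule injective_mat_invertible[OF gram_mat_carrier])
  fix v :: "real vec"
  assume v: "v \<in> carrier_vec (Suc n)" and Gv: "gram_mat n a b *\<^sub>v v = 0\<^sub>v (Suc n)"
  have "(\<Sum>k\<le>n. gram n a b j k * v $ k) = 0" if j: "j \<le> n" for j
  proof -
    have "(gram_mat n a b *\<^sub>v v) $ j = (\<Sum>k\<in>{0..<Suc n}. gram n a b j k * v $ k)"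
      using j v by (simp add: gram_mat_def scalar_prod_def)
    then show ?thesis using Gv j by (simp add: atLeast0LessThan lessThan_Suc_atMost)
  qed
  then have "v $ k = 0" if "k < Suc n" for k using gram_definite that by simp
  then show "v = 0\<^sub>v (Suc n)" using v by (intro eq_vecI) auto
qed

lemma biorthogonal_iff_left_inverse:
  "(\<forall>i\<le>n. \<forall>k\<le>n. jip a b (\<lambda>x. \<Sum>j\<le>n. c (int i) (int j) * bern n j x) (bern n k)
                    = (if i = k then 1 else 0))
   \<longleftrightarrow> coeff_mat n c * gram_mat n a b = 1\<^sub>m (Suc n)"
proof -
  have entry: "(coeff_mat n c * gram_mat n a b) $$ (i, k)
      = jip a b (\<lambda>x. \<Sum>j\<le>n. c (int i) (int j) * bern n j x) (bern n k)" if "i \<le> n" "k \<le> n" for i k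
    using that mat_mult_entry[OF coeff_mat_carrier gram_mat_carrier, of i n k]
    by (simp add: jip_bern_expansion_basis coeff_mat_def gram_mat_def)
  show ?thesis
  proof
    assume "\<forall>i\<le>n. \<forall>k\<le>n. jip a b (\<lambda>x. \<Sum>j\<le>n. c (int i) (int j) * bern n j x) (bern n k)
                    = (if i = k then 1 else 0)"
    then show "coeff_mat n c * gram_mat n a b = 1\<^sub>m (Suc n)"
      using entry by (intro eq_matI) (auto simp: coeff_mat_def gram_mat_def)
  next
    assume "coeff_mat n c * gram_mat n a b = 1\<^sub>m (Suc n)"
    then show "\<forall>i\<le>n. \<forall>k\<le>n. jip a b (\<lambda>x. \<Sum>j\<le>n. c (int i) (int j) * bern n j x) (bern n k)
                    = (if i = k then 1 else 0)"
      using entry by (metis index_one_mat(1) le_imp_less_Suc)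
  qed
qed

(* Dual coefficients exist: extend the entries of the inverse Gram matrix by zero. *)
lemma dual_spec_exists: "\<exists>c. dual_spec n a b c"
proof -
  obtain X where X: "X \<in> carrier_mat (Suc n) (Suc n)" and XG: "X * gram_mat n a b = 1\<^sub>m (Suc n)"
    by (rule gram_mat_invertible)
  define c where "c i j = (if 0 \<le> i \<and> i \<le> int n \<and> 0 \<le> j \<and> j \<le> int n then X $$ (nat i, nat j) else 0)"
    for i j
  have "coeff_mat n c = X"
    using X by (intro eq_matI) (auto simp: coeff_mat_def c_def)
  then have "dual_spec n a b c"
    unfolding dual_spec_def biorthogonal_iff_left_inverse using XG by (auto simp: c_def)
  then show ?thesis by blast
qed

(* Dual coefficients are unique, since a left inverse of the Gram matrix is unique. *)
lemma dual_spec_unique: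
  assumes c: "dual_spec n a b c" and d: "dual_spec n a b d"
  shows "c = d"
proof -
  have CG: "coeff_mat n c * gram_mat n a b = 1\<^sub>m (Suc n)"
    and DG: "coeff_mat n d * gram_mat n a b = 1\<^sub>m (Suc n)"
    using c d unfolding dual_spec_def biorthogonal_iff_left_inverse by blast+
  have GD: "gram_mat n a b * coeff_mat n d = 1\<^sub>m (Suc n)"
    by (rule mat_mult_left_right_inverse[OF coeff_mat_carrier gram_mat_carrier DG])
  have "coeff_mat n c = coeff_mat n c * (gram_mat n a b * coeff_mat n d)"
    by (simp add: GD right_mult_one_mat[OF coeff_mat_carrier])
  also have "\<dots> = coeff_mat n d"
    using CG by (simp add: assoc_mult_mat[OF coeff_mat_carrier gram_mat_carrier coeff_mat_carrier, symmetric]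
        left_mult_one_mat[OF coeff_mat_carrier])
  finally have mats: "coeff_mat n c = coeff_mat n d" .
  have inside: "c (int i) (int j) = d (int i) (int j)" if "i \<le> n" "j \<le> n" for i j
    using arg_cong[OF mats, of "\<lambda>M. M $$ (i, j)"] that by (simp add: coeff_mat_def)
  show "c = d"
  proof (intro ext)
    fix i j :: int
    show "c i j = d i j"
    proof (cases "0 \<le> i \<and> i \<le> int n \<and> 0 \<le> j \<and> j \<le> int n")
      case True
      then have "i = int (nat i)" "j = int (nat j)" "nat i \<le> n" "nat j \<le> n" by auto
      then show ?thesis using inside by metis
    next
      case False
      then show ?thesis using c d unfolding dual_spec_def by auto
    qed
  qed
qed

lemma dual_coeff_spec: "dual_spec n a b (dual_coeff n a b)"
  unfolding dual_coeff_THE using dual_spec_exists dual_spec_unique by (metis theI)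

lemma dual_mat_inverse:
  shows "coeff_mat n (dual_coeff n a b) * gram_mat n a b = 1\<^sub>m (Suc n)"
    and "gram_mat n a b * coeff_mat n (dual_coeff n a b) = 1\<^sub>m (Suc n)"
proof -
  show left: "coeff_mat n (dual_coeff n a b) * gram_mat n a b = 1\<^sub>m (Suc n)"
    using dual_coeff_spec unfolding dual_spec_def biorthogonal_iff_left_inverse by blast
  show "gram_mat n a b * coeff_mat n (dual_coeff n a b) = 1\<^sub>m (Suc n)"
    by (rule mat_mult_left_right_inverse[OF coeff_mat_carrier gram_mat_carrier left])
qed

end

(* Coefficients of the recurrence; note rec_A n b n = 0 and rec_B n a 0 = 0. *)
definition rec_A :: "nat \<Rightarrow> real \<Rightarrow> real \<Rightarrow> real" where
  "rec_A n b h = (h - real n) * (h + b + 1)"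

definition rec_B :: "nat \<Rightarrow> real \<Rightarrow> real \<Rightarrow> real" where
  "rec_B n a h = h * (h - real n - a - 1)"

definition rec_D :: "nat \<Rightarrow> real \<Rightarrow> real \<Rightarrow> real \<Rightarrow> real" where
  "rec_D n a b h = - 2 * h ^ 2 + (2 * real n + a - b) * h"

(* The tridiagonal matrix L: row k carries A(k-1), D(k), B(k+1) in columns k-1, k, k+1.
   It is the matrix of the Jacobi differential operator in the Bernstein basis. *)
definition jacobi_entry :: "nat \<Rightarrow> real \<Rightarrow> real \<Rightarrow> nat \<Rightarrow> nat \<Rightarrow> real" where
  "jacobi_entry n a b k l =
     (if l + 1 = k then rec_A n b (real l) else 0) + (if l = k + 1 then rec_B n a (real l) else 0)
     + (if l = k then rec_D n a b (real k) else 0)"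

definition jacobi_mat :: "nat \<Rightarrow> real \<Rightarrow> real \<Rightarrow> real mat" where
  "jacobi_mat n a b = mat (Suc n) (Suc n) (\<lambda>(k, l). jacobi_entry n a b k l)"

(* The entry (k, m) of L G divided by C(n,k) C(n,m); it depends on m only through s = k + m. *)
definition jacobi_form :: "nat \<Rightarrow> real \<Rightarrow> real \<Rightarrow> nat \<Rightarrow> nat \<Rightarrow> real" where
  "jacobi_form n a b k s =
     - real k * (real k + b) * bern_moment n a b (s - 1) + rec_D n a b (real k) * bern_moment n a b s
     - real (n - k) * (real (n - k) + a) * bern_moment n a b (s + 1)"

lemma jacobi_mat_carrier: "jacobi_mat n a b \<in> carrier_mat (Suc n) (Suc n)"
  by (simp add: jacobi_mat_def)

lemma binomial_shift: "real (Suc k) * real (n choose Suc k) = real (n - k) * real (n choose k)"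
proof -
  have "Suc k * (n choose Suc k) = (n - k) * (n choose k)"
    using binomial_absorption[of k n] binomial_absorb_comp[of n k] by simp
  then show ?thesis by (metis of_nat_mult)
qed

lemma sum_delta_below:
  "(\<Sum>l\<le>n. (if Suc l = k then f l else 0)) = (if 1 \<le> k \<and> k \<le> Suc n then f (k - 1) else (0::real))"
proof (cases k)
  case 0 then show ?thesis by simp
next
  case (Suc k')
  have "(\<Sum>l\<le>n. (if Suc l = k then f l else 0)) = (\<Sum>l\<le>n. (if l = k' then f l else 0))"
    using Suc by (intro sum.cong) auto
  then show ?thesis using Suc by (simp add: sum.delta')
qed

lemma rec_A_gram:
  assumes "1 \<le> k" "k \<le> n"
  shows "rec_A n b (real (k - 1)) * gram n a b (k - 1) m
           = - real k * (real k + b) * (real (n choose k) * real (n choose m)) * bern_moment n a b (k + m - 1)"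
proof -
  obtain k' where k: "k = Suc k'" using assms(1) by (cases k) auto
  have "real (n - k') = real n - real k'" using assms k by (simp add: of_nat_diff)
  then have "rec_A n b (real k') * real (n choose k') = - (real k + b) * (real (n - k') * real (n choose k'))"
    unfolding rec_A_def k by (simp add: algebra_simps)
  also have "\<dots> = - real k * (real k + b) * real (n choose k)"
    unfolding k binomial_shift[symmetric] by (simp add: algebra_simps)
  finally have key: "rec_A n b (real k') * real (n choose k') = - real k * (real k + b) * real (n choose k)" .
  have "rec_A n b (real (k - 1)) * gram n a b (k - 1) m
      = (rec_A n b (real k') * real (n choose k')) * (real (n choose m) * bern_moment n a b (k' + m))"
    unfolding gram_def k by simp
  also have "\<dots> = - real k * (real k + b) * (real (n choose k) * real (n choose m)) * bern_moment n a b (k' + m)"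
    unfolding key by simp
  finally show ?thesis using k by simp
qed

lemma rec_B_gram:
  assumes "k < n"
  shows "rec_B n a (real (k + 1)) * gram n a b (k + 1) m
           = - real (n - k) * (real (n - k) + a) * (real (n choose k) * real (n choose m))
               * bern_moment n a b (k + m + 1)"
proof -
  have nk: "real (n - k) = real n - real k" using assms by (simp add: of_nat_diff)
  have "rec_B n a (real (k + 1)) * real (n choose Suc k)
          = (real k - real n - a) * (real (Suc k) * real (n choose Suc k))"
    unfolding rec_B_def by (simp add: algebra_simps)
  also have "\<dots> = - real (n - k) * (real (n - k) + a) * real (n choose k)"
    unfolding binomial_shift nk by (simp add: algebra_simps)
  finally have key: "rec_B n a (real (k + 1)) * real (n choose Suc k)
                       = - real (n - k) * (real (n - k) + a) * real (n choose k)" .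
  have "rec_B n a (real (k + 1)) * gram n a b (k + 1) m
      = (rec_B n a (real (k + 1)) * real (n choose Suc k)) * (real (n choose m) * bern_moment n a b (k + m + 1))"
    unfolding gram_def by simp
  also have "\<dots> = - real (n - k) * (real (n - k) + a) * (real (n choose k) * real (n choose m))
                     * bern_moment n a b (k + m + 1)"
    unfolding key by simp
  finally show ?thesis .
qed

lemma jacobi_gram_entry:
  assumes k: "k \<le> n"
  shows "(\<Sum>l\<le>n. jacobi_entry n a b k l * gram n a b l m)
           = real (n choose k) * real (n choose m) * jacobi_form n a b k (k + m)"
proof -
  have "(\<Sum>l\<le>n. jacobi_entry n a b k l * gram n a b l m) =
     (\<Sum>l\<le>n. (if l + 1 = k then rec_A n b (real l) * gram n a b l m else 0))
     + (\<Sum>l\<le>n. (if l = k + 1 then rec_B n a (real l) * gram n a b l m else 0))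
     + (\<Sum>l\<le>n. (if l = k then rec_D n a b (real k) * gram n a b l m else 0))"
    unfolding jacobi_entry_def sum.distrib[symmetric] by (intro sum.cong) (auto simp: algebra_simps)
  also have "(\<Sum>l\<le>n. (if l + 1 = k then rec_A n b (real l) * gram n a b l m else 0))
      = - real k * (real k + b) * (real (n choose k) * real (n choose m)) * bern_moment n a b (k + m - 1)"
  proof (cases "k = 0")
    case True then show ?thesis by simp
  next
    case False
    then show ?thesis using k rec_A_gram[of k n b a m] by (simp add: sum_delta_below)
  qed
  also have "(\<Sum>l\<le>n. (if l = k + 1 then rec_B n a (real l) * gram n a b l m else 0))
      = - real (n - k) * (real (n - k) + a) * (real (n choose k) * real (n choose m))
          * bern_moment n a b (k + m + 1)"
  proof (cases "k = n")
    case True then show ?thesis by simp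
  next
    case False
    then show ?thesis using k rec_B_gram[of k n a b m] by (simp add: sum.delta')
  qed
  also have "(\<Sum>l\<le>n. (if l = k then rec_D n a b (real k) * gram n a b l m else 0))
      = rec_D n a b (real k) * gram n a b k m"
    using k by (simp add: sum.delta')
  finally show ?thesis unfolding jacobi_form_def gram_def by (simp add: algebra_simps)
qed

(* The rational identity behind the symmetry of L G. *)
lemma jacobi_symmetry_identity:
  fixes K M N S a b :: real
  assumes S: "S = K + M" and X: "b + S \<noteq> 0" and Y: "a + 2 * N - S \<noteq> 0"
  defines "p \<equiv> (a + 1 + 2 * N - S) / (b + S)" and "q \<equiv> (b + 1 + S) / (a + 2 * N - S)"
  shows "- K * (K + b) * p + (- 2 * K ^ 2 + (2 * N + a - b) * K) - (N - K) * (N - K + a) * q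
       = - M * (M + b) * p + (- 2 * M ^ 2 + (2 * N + a - b) * M) - (N - M) * (N - M + a) * q"
proof -
  have X': "b + (K + M) \<noteq> 0" "b + (M + K) \<noteq> 0" using X S by (auto simp: algebra_simps)
  have Y': "a + 2 * N - (K + M) \<noteq> 0" "a + 2 * N - (M + K) \<noteq> 0" using Y S by (auto simp: algebra_simps)
  show ?thesis
    using X' Y' unfolding p_def q_def S by (simp add: field_simps) (simp add: algebra_simps power2_eq_square)
qed

context
  fixes n :: nat and a b :: real
  assumes a: "a > -1" and b: "b > -1"
begin

lemma bern_moment_step:
  assumes "1 \<le> s" "s \<le> 2 * n"
  shows "bern_moment n a b (s - 1) * (b + real s) = bern_moment n a b s * (a + 1 + 2 * real n - real s)"
proof -
  define x where "x = b + real s"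
  define y where "y = a + 1 + 2 * real n - real s"
  have "x > 0" "y > 0" using assms a b by (simp_all add: x_def y_def)
  moreover have "bern_moment n a b s = Beta (x + 1) y" "bern_moment n a b (s - 1) = Beta x (y + 1)"
    using assms unfolding bern_moment_def x_def y_def by (simp_all add: of_nat_diff algebra_simps)
  ultimately show ?thesis using Beta_unit_shifts unfolding x_def[symmetric] y_def[symmetric] by simp
qed

(* The key symmetry: with s = k + m fixed, the normalised entry does not change when k and m
   are interchanged, because consecutive moments V(s-1), V(s), V(s+1) are proportional. *)
lemma jacobi_form_sym:
  assumes k: "k \<le> n" and m: "m \<le> n"
  shows "jacobi_form n a b k (k + m) = jacobi_form n a b m (k + m)"
proof (cases "k = m")
  case True then show ?thesis by simp
next
  case False
  define s where "s = k + m"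
  have s: "1 \<le> s" "s + 1 \<le> 2 * n" using False k m by (auto simp: s_def)
  have X: "b + real s > 0" and Y: "a + 2 * real n - real s > 0" using a b s by auto
  define p where "p = (a + 1 + 2 * real n - real s) / (b + real s)"
  define q where "q = (b + 1 + real s) / (a + 2 * real n - real s)"
  have down: "bern_moment n a b (s - 1) = bern_moment n a b s * p"
    using bern_moment_step[of s] s X unfolding p_def by (simp add: field_simps)
  have up: "bern_moment n a b (s + 1) = bern_moment n a b s * q"
    using bern_moment_step[of "s + 1"] s Y unfolding q_def by (simp add: field_simps)
  have form: "jacobi_form n a b h s = bern_moment n a b s *
      (- real h * (real h + b) * p + rec_D n a b (real h) - (real n - real h) * (real n - real h + a) * q)"
    if "h \<le> n" for h
    unfolding jacobi_form_def down up using that by (simp add: of_nat_diff algebra_simps)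
  have "real s = real k + real m" by (simp add: s_def)
  then have "- real k * (real k + b) * p + rec_D n a b (real k) - (real n - real k) * (real n - real k + a) * q
      = - real m * (real m + b) * p + rec_D n a b (real m) - (real n - real m) * (real n - real m + a) * q"
    unfolding p_def q_def rec_D_def using X Y by (intro jacobi_symmetry_identity) auto
  then show ?thesis using form k m unfolding s_def by simp
qed

lemma jacobi_gram_symmetric:
  "jacobi_mat n a b * gram_mat n a b = gram_mat n a b * transpose_mat (jacobi_mat n a b)"
proof (rule eq_matI)
  fix k m assume "k < dim_row (gram_mat n a b * transpose_mat (jacobi_mat n a b))"
    "m < dim_col (gram_mat n a b * transpose_mat (jacobi_mat n a b))"
  then have km: "k \<le> n" "m \<le> n" by (auto simp: gram_mat_def jacobi_mat_def)
  have LT: "transpose_mat (jacobi_mat n a b) \<in> carrier_mat (Suc n) (Suc n)"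
    by (simp add: jacobi_mat_def)
  have "(jacobi_mat n a b * gram_mat n a b) $$ (k, m) = (\<Sum>l\<le>n. jacobi_entry n a b k l * gram n a b l m)"
    using km mat_mult_entry[OF jacobi_mat_carrier gram_mat_carrier, of k n m]
    by (simp add: jacobi_mat_def gram_mat_def)
  also have "\<dots> = real (n choose k) * real (n choose m) * jacobi_form n a b k (k + m)"
    by (rule jacobi_gram_entry[OF km(1)])
  also have "\<dots> = real (n choose m) * real (n choose k) * jacobi_form n a b m (m + k)"
    using jacobi_form_sym[OF km] by (simp add: add.commute)
  also have "\<dots> = (\<Sum>l\<le>n. jacobi_entry n a b m l * gram n a b l k)"
    by (rule jacobi_gram_entry[OF km(2), symmetric])
  also have "\<dots> = (gram_mat n a b * transpose_mat (jacobi_mat n a b)) $$ (k, m)"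
    using km mat_mult_entry[OF gram_mat_carrier LT, of k m]
    by (simp add: jacobi_mat_def gram_mat_def gram_sym mult.commute)
  finally show "(jacobi_mat n a b * gram_mat n a b) $$ (k, m)
                  = (gram_mat n a b * transpose_mat (jacobi_mat n a b)) $$ (k, m)" .
qed (auto simp: gram_mat_def jacobi_mat_def)

end

(* Column m of L applied to a sequence: the boundary coefficients A(n) and B(0) vanish,
   so no case distinction is needed. *)
lemma jacobi_column_sum:
  fixes f :: "int \<Rightarrow> real"
  assumes m: "m \<le> n"
  shows "(\<Sum>l\<le>n. f (int l) * jacobi_entry n a b l m)
           = rec_A n b (real m) * f (int m + 1) + rec_B n a (real m) * f (int m - 1)
             + rec_D n a b (real m) * f (int m)"
proof -
  have "(\<Sum>l\<le>n. f (int l) * jacobi_entry n a b l m) =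
     (\<Sum>l\<le>n. (if l = m + 1 then rec_A n b (real m) * f (int l) else 0))
     + (\<Sum>l\<le>n. (if l + 1 = m then rec_B n a (real m) * f (int l) else 0))
     + (\<Sum>l\<le>n. (if l = m then rec_D n a b (real m) * f (int l) else 0))"
    unfolding jacobi_entry_def sum.distrib[symmetric] by (intro sum.cong) (auto simp: algebra_simps)
  also have "(\<Sum>l\<le>n. (if l = m + 1 then rec_A n b (real m) * f (int l) else 0))
      = rec_A n b (real m) * f (int m + 1)"
    using m by (cases "m = n") (auto simp: sum.delta' rec_A_def add.commute)
  also have "(\<Sum>l\<le>n. (if l + 1 = m then rec_B n a (real m) * f (int l) else 0))
      = rec_B n a (real m) * f (int m - 1)"
    using m by (cases "m = 0") (auto simp: sum_delta_below rec_B_def of_nat_diff)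
  also have "(\<Sum>l\<le>n. (if l = m then rec_D n a b (real m) * f (int l) else 0))
      = rec_D n a b (real m) * f (int m)"
    using m by (simp add: sum.delta')
  finally show ?thesis .
qed

context
  fixes n :: nat and a b :: real
  assumes a: "a > -1" and b: "b > -1"
begin

(* Comparing entry (i, j) of C L = L^T C, where C is the matrix of dual coefficients. *)
lemma dual_coeff_recurrence_nat:
  assumes i: "i \<le> n" and j: "j \<le> n"
  defines "c \<equiv> dual_coeff n a b"
  shows "rec_A n b (real i) * c (int i + 1) (int j) + rec_B n a (real i) * c (int i - 1) (int j)
           + rec_D n a b (real i) * c (int i) (int j)
       = rec_A n b (real j) * c (int i) (int j + 1) + rec_B n a (real j) * c (int i) (int j - 1)
           + rec_D n a b (real j) * c (int i) (int j)"
proof -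
  let ?C = "coeff_mat n c" and ?L = "jacobi_mat n a b"
  have LT: "transpose_mat ?L \<in> carrier_mat (Suc n) (Suc n)" by (simp add: jacobi_mat_def)
  have comm: "?C * ?L = transpose_mat ?L * ?C"
    using inverse_intertwines_transpose[OF coeff_mat_carrier gram_mat_carrier jacobi_mat_carrier
        dual_mat_inverse[OF a b] jacobi_gram_symmetric[OF a b]]
    unfolding c_def .
  have "(?C * ?L) $$ (i, j) = (\<Sum>l\<le>n. c (int i) (int l) * jacobi_entry n a b l j)"
    using mat_mult_entry[OF coeff_mat_carrier jacobi_mat_carrier, where i = i and k = j] i j
    by (simp add: coeff_mat_def jacobi_mat_def)
  also have "\<dots> = rec_A n b (real j) * c (int i) (int j + 1) + rec_B n a (real j) * c (int i) (int j - 1)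
           + rec_D n a b (real j) * c (int i) (int j)"
    by (rule jacobi_column_sum[OF j])
  finally have right: "(?C * ?L) $$ (i, j) = \<dots>" .
  have "(transpose_mat ?L * ?C) $$ (i, j) = (\<Sum>l\<le>n. c (int l) (int j) * jacobi_entry n a b l i)"
    using mat_mult_entry[OF LT coeff_mat_carrier, where i = i and k = j] i j
    by (simp add: coeff_mat_def jacobi_mat_def mult.commute)
  also have "\<dots> = rec_A n b (real i) * c (int i + 1) (int j) + rec_B n a (real i) * c (int i - 1) (int j)
           + rec_D n a b (real i) * c (int i) (int j)"
    using jacobi_column_sum[OF i, where f = "\<lambda>l. c l (int j)"] by simp
  finally have left: "(transpose_mat ?L * ?C) $$ (i, j) = \<dots>" .
  show ?thesis using left right comm by simp
qed

lemma dual_coeff_recurrence: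
  fixes i j :: int
  assumes "0 \<le> i" "i \<le> int n - 1" "0 \<le> j" "j \<le> int n"
  defines "c \<equiv> dual_coeff n a b"
  shows "c (i + 1) j = (1 / rec_A n b (of_int i)) *
           (of_int (i - j) * (2 * of_int i + 2 * of_int j - 2 * real n - a + b) * c i j
            + rec_B n a (of_int j) * c i (j - 1) + rec_A n b (of_int j) * c i (j + 1)
            - rec_B n a (of_int i) * c (i - 1) j)"
proof -
  obtain i' j' where i: "i = int i'" and j: "j = int j'" using assms(1,3) by (metis nonneg_int_cases)
  have i': "i' < n" and j': "j' \<le> n" using assms(2,4) unfolding i j by auto
  have A_nonzero: "rec_A n b (real i') \<noteq> 0" unfolding rec_A_def using i' b by auto
  have D_diff: "rec_D n a b (real j') - rec_D n a b (real i')
      = (real i' - real j') * (2 * real i' + 2 * real j' - 2 * real n - a + b)"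
    unfolding rec_D_def by (simp add: algebra_simps power2_eq_square)
  have "rec_A n b (real i') * c (i + 1) j
      = (rec_D n a b (real j') - rec_D n a b (real i')) * c i j + rec_B n a (real j') * c i (j - 1)
        + rec_A n b (real j') * c i (j + 1) - rec_B n a (real i') * c (i - 1) j"
    using dual_coeff_recurrence_nat[of i' j'] i' j' unfolding i j c_def by (simp add: algebra_simps)
  then show ?thesis
    using A_nonzero unfolding D_diff i j by (simp add: field_simps)
qed

end

(* Weights w_j and normalising constant mu with w G = mu e_0. *)
definition row0_weight :: "nat \<Rightarrow> real \<Rightarrow> real \<Rightarrow> nat \<Rightarrow> real" where
  "row0_weight n a b j = (-1) ^ j / (pochhammer (a + 1) (n - j) * pochhammer (b + 2) j)"

definition row0_norm :: "nat \<Rightarrow> real \<Rightarrow> real \<Rightarrow> real" where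
  "row0_norm n a b = Beta (b + 1) (a + 1) * fact n / (pochhammer (a + b + 2) n * pochhammer (b + 2) n)"

context
  fixes n :: nat and a b :: real
  assumes a: "a > -1" and b: "b > -1"
begin

lemma pochhammer_shifted_pos: "pochhammer (a + 1) m > 0" "pochhammer (b + 1) m > 0"
  "pochhammer (b + 2) m > 0" "pochhammer (a + b + 2) m > 0"
  using a b by (auto intro!: pochhammer_pos)

lemma bern_moment_pochhammer:
  assumes "s \<le> 2 * n"
  shows "bern_moment n a b s = Beta (b + 1) (a + 1) * pochhammer (b + 1) s
           * pochhammer (a + 1) (2 * n - s) / pochhammer (a + b + 2) (2 * n)"
proof -
  have "bern_moment n a b s = Beta ((b + 1) + real s) ((a + 1) + real (2 * n - s))"
    unfolding bern_moment_def by (simp add: add_ac)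
  also have "\<dots> = Beta (b + 1) (a + 1) * pochhammer (b + 1) s * pochhammer (a + 1) (2 * n - s)
                    / pochhammer (b + 1 + (a + 1)) (s + (2 * n - s))"
    by (rule Beta_shift) (use a b in auto)
  also have "s + (2 * n - s) = 2 * n" using assms by simp
  also have "b + 1 + (a + 1) = a + b + 2" by simp
  finally show ?thesis .
qed

(* Closed form of w_j G_jk for k >= 1: up to a factor independent of j, it is (-1)^j C(n,j)
   times a product of two Pochhammer symbols, each polynomial in j. *)
lemma weight_gram_summand:
  assumes k1: "1 \<le> k" and kn: "k \<le> n" and j: "j \<le> n"
  shows "row0_weight n a b j * gram n a b j k
           = real (n choose k) * Beta (b + 1) (a + 1) / pochhammer (a + b + 2) (2 * n)
             * ((-1) ^ j * real (n choose j)
                * ((b + 1) * (pochhammer (b + 2 + real j) (k - 1) * pochhammer (a + 1 + real (n - j)) (n - k))))"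
proof -
  define PA where "PA = pochhammer (a + 1) (n - j)"
  define PB where "PB = pochhammer (b + 2) j"
  define Q1 where "Q1 = pochhammer (b + 2 + real j) (k - 1)"
  define Q2 where "Q2 = pochhammer (a + 1 + real (n - j)) (n - k)"
  have "j + k = Suc j + (k - 1)" using k1 by simp
  then have "pochhammer (b + 1) (j + k) = pochhammer (b + 1) (Suc j) * Q1"
    unfolding Q1_def by (simp only: pochhammer_product') (simp add: add_ac)
  also have "pochhammer (b + 1) (Suc j) = (b + 1) * PB"
    unfolding PB_def by (simp add: pochhammer_rec add_ac)
  finally have p1: "pochhammer (b + 1) (j + k) = (b + 1) * PB * Q1" .
  have "2 * n - (j + k) = (n - j) + (n - k)" using j kn by simp
  then have p2: "pochhammer (a + 1) (2 * n - (j + k)) = PA * Q2"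
    unfolding PA_def Q2_def by (simp only: pochhammer_product')
  have nonzero: "PA \<noteq> 0" "PB \<noteq> 0" "pochhammer (a + b + 2) (2 * n) \<noteq> 0"
    using pochhammer_shifted_pos unfolding PA_def PB_def by (metis less_irrefl)+
  have "j + k \<le> 2 * n" using j kn by simp
  then show ?thesis
    unfolding gram_def bern_moment_pochhammer[OF \<open>j + k \<le> 2 * n\<close>] p1 p2 row0_weight_def
      PA_def[symmetric] PB_def[symmetric] Q1_def[symmetric] Q2_def[symmetric]
    using nonzero by (simp add: field_simps)
qed

(* Hence for k >= 1 the k-th entry of w G is an n-th finite difference of a polynomial of
   degree n - 1, which vanishes. *)
lemma weight_gram_zero:
  assumes k1: "1 \<le> k" and kn: "k \<le> n"
  shows "(\<Sum>j\<le>n. row0_weight n a b j * gram n a b j k) = 0"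
proof -
  obtain P1 :: "real poly" where P1: "degree P1 \<le> k - 1"
    "\<And>x. poly P1 x = pochhammer (b + 2 + 1 * x) (k - 1)"
    by (rule pochhammer_affine_poly[where m = "k - 1" and c = "b + 2" and s = 1]) blast
  obtain P2 :: "real poly" where P2: "degree P2 \<le> n - k"
    "\<And>x. poly P2 x = pochhammer (a + 1 + real n + (-1) * x) (n - k)"
    by (rule pochhammer_affine_poly[where m = "n - k" and c = "a + 1 + real n" and s = "-1"]) blast
  define P where "P = Polynomial.smult (b + 1) (P1 * P2)"
  have "degree P \<le> (k - 1) + (n - k)"
    unfolding P_def using P1(1) P2(1) by (metis add_le_mono degree_mult_le degree_smult_le order_trans)
  then have degP: "degree P < n" using k1 kn by simp
  have poly_P: "poly P (real j)
      = (b + 1) * (pochhammer (b + 2 + real j) (k - 1) * pochhammer (a + 1 + real (n - j)) (n - k))"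
    if "j \<le> n" for j
    unfolding P_def using that by (simp add: P1(2) P2(2) of_nat_diff algebra_simps)
  have "(\<Sum>j\<le>n. row0_weight n a b j * gram n a b j k)
      = real (n choose k) * Beta (b + 1) (a + 1) / pochhammer (a + b + 2) (2 * n)
        * (\<Sum>j\<le>n. (-1) ^ j * real (n choose j) * poly P (real j))"
    using weight_gram_summand[OF k1 kn] poly_P by (simp add: sum_distrib_left)
  also have "\<dots> = 0" by (simp add: finite_difference_poly[OF degP])
  finally show ?thesis .
qed

lemma gram_row_sum:
  assumes j: "j \<le> n"
  shows "(\<Sum>k\<le>n. gram n a b j k) = real (n choose j) * Beta (b + 1 + real j) (a + 1 + real (n - j))"
proof -
  have basis: "(\<lambda>x. \<Sum>l\<le>n. of_bool (l = j) * bern n l x) = bern n j"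
    using j by (simp add: sum_delta_mult)
  have one: "(\<lambda>x. \<Sum>k\<le>n. 1 * bern n k x) = (\<lambda>x. 1)"
    by (simp add: bern_partition_of_unity)
  have "jip a b (bern n j) (\<lambda>x. 1) = (\<Sum>l\<le>n. \<Sum>k\<le>n. of_bool (l = j) * 1 * gram n a b l k)"
    using jip_bern_expansions[OF a b, where n = n and u = "\<lambda>l. of_bool (l = j)" and v = "\<lambda>k. 1"]
    unfolding basis one .
  also have "\<dots> = (\<Sum>l\<le>n. of_bool (l = j) * (\<Sum>k\<le>n. gram n a b l k))"
    by (simp add: sum_distrib_left)
  also have "\<dots> = (\<Sum>k\<le>n. gram n a b j k)" using j by (rule sum_delta_mult)
  finally have "(\<Sum>k\<le>n. gram n a b j k) = jip a b (bern n j) (\<lambda>x. 1)" ..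
  also have "\<dots> = (LINT x:{0..1}|lborel. real (n choose j) * ((1 - x) powr a * x powr b * (x ^ j * (1 - x) ^ (n - j))))"
    unfolding jip_def by (rule set_lebesgue_integral_cong) (auto simp: bern_def algebra_simps)
  also have "\<dots> = real (n choose j) * Beta (b + 1 + real j) (a + 1 + real (n - j))"
    by (simp add: jacobi_monomial_integral(2)[OF a b])
  finally show ?thesis .
qed

lemma weight_row_sum:
  assumes j: "j \<le> n"
  shows "row0_weight n a b j * (\<Sum>k\<le>n. gram n a b j k)
           = Beta (b + 1) (a + 1) / pochhammer (a + b + 2) n * (b + 1)
             * ((-1) ^ j * real (n choose j) * (1 / ((b + 1) + real j)))"
proof -
  define PA where "PA = pochhammer (a + 1) (n - j)"
  define PB where "PB = pochhammer (b + 2) j"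
  define PB1 where "PB1 = pochhammer (b + 1) j"
  define PS where "PS = pochhammer (a + b + 2) n"
  define D where "D = b + 1 + real j"
  have nonzero: "PA \<noteq> 0" "PB \<noteq> 0" "PS \<noteq> 0" "D \<noteq> 0"
    using pochhammer_shifted_pos b unfolding PA_def PB_def PS_def D_def
    by (metis less_irrefl, metis less_irrefl, metis less_irrefl, simp)
  have "PB1 * D = pochhammer (b + 1) (Suc j)" unfolding PB1_def D_def by (simp add: pochhammer_Suc)
  also have "\<dots> = (b + 1) * PB" unfolding PB_def by (simp add: pochhammer_rec add_ac)
  finally have "PB1 * D = (b + 1) * PB" .
  then have PB1: "PB1 = (b + 1) * PB / D" using nonzero(4) by (simp add: field_simps)
  have "Beta (b + 1 + real j) (a + 1 + real (n - j))
      = Beta (b + 1) (a + 1) * PB1 * PA / pochhammer (b + 1 + (a + 1)) (j + (n - j))"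
    unfolding PB1_def PA_def by (rule Beta_shift) (use a b in auto)
  also have "pochhammer (b + 1 + (a + 1)) (j + (n - j)) = PS" using j unfolding PS_def by (simp add: add_ac)
  finally have beta: "Beta (b + 1 + real j) (a + 1 + real (n - j)) = Beta (b + 1) (a + 1) * PB1 * PA / PS" .
  show ?thesis
    unfolding gram_row_sum[OF j] beta row0_weight_def PA_def[symmetric] PB_def[symmetric]
      PS_def[symmetric] PB1
    unfolding D_def[symmetric] using nonzero by (simp add: field_simps)
qed

(* The 0-th entry of w G: since the other entries vanish, it equals sum_j w_j <B_j, 1>,
   an alternating binomial sum of reciprocals. *)
lemma weight_gram_first: "(\<Sum>j\<le>n. row0_weight n a b j * gram n a b j 0) = row0_norm n a b"
proof -
  define c where "c = Beta (b + 1) (a + 1) / pochhammer (a + b + 2) n * (b + 1)"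
  have "(\<Sum>k\<le>n. \<Sum>j\<le>n. row0_weight n a b j * gram n a b j k)
      = (\<Sum>j\<le>n. row0_weight n a b j * gram n a b j 0)
        + (\<Sum>k\<in>{..n} - {0}. \<Sum>j\<le>n. row0_weight n a b j * gram n a b j k)"
    by (subst sum.remove[of _ 0]) auto
  also have "(\<Sum>k\<in>{..n} - {0}. \<Sum>j\<le>n. row0_weight n a b j * gram n a b j k) = 0"
    by (intro sum.neutral) (auto intro!: weight_gram_zero)
  finally have "(\<Sum>j\<le>n. row0_weight n a b j * gram n a b j 0)
      = (\<Sum>k\<le>n. \<Sum>j\<le>n. row0_weight n a b j * gram n a b j k)" by simp
  also have "\<dots> = (\<Sum>j\<le>n. row0_weight n a b j * (\<Sum>k\<le>n. gram n a b j k))"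
    by (subst sum.swap) (simp add: sum_distrib_left)
  also have "\<dots> = (\<Sum>j\<le>n. c * ((-1) ^ j * real (n choose j) * (1 / ((b + 1) + real j))))"
    unfolding c_def by (rule sum.cong[OF refl], rule weight_row_sum) simp
  also have "\<dots> = c * (\<Sum>j\<le>n. (-1) ^ j * real (n choose j) * (1 / ((b + 1) + real j)))"
    by (simp add: sum_distrib_left)
  also have "\<dots> = c * (fact n / pochhammer (b + 1) (Suc n))"
    using b by (subst alternating_binomial_reciprocal) auto
  also have "pochhammer (b + 1) (Suc n) = (b + 1) * pochhammer (b + 2) n"
    by (simp add: pochhammer_rec add_ac)
  also have "c * (fact n / ((b + 1) * pochhammer (b + 2) n)) = row0_norm n a b"
    unfolding row0_norm_def c_def using b by simp
  finally show ?thesis .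
qed

lemma dual_coeff_first_row:
  assumes m: "m \<le> n"
  shows "dual_coeff n a b 0 (int m)
           = pochhammer (a + b + 2) n * pochhammer (b + 2) n / (fact n * Beta (a + 1) (b + 1))
             * ((-1) ^ m / (pochhammer (a + 1) (n - m) * pochhammer (b + 2) m))"
proof -
  have norm_pos: "row0_norm n a b > 0"
    unfolding row0_norm_def Beta_def using a b pochhammer_shifted_pos by simp
  have solves: "(\<Sum>j\<le>n. row0_weight n a b j / row0_norm n a b * gram_mat n a b $$ (j, k))
                  = (if k = 0 then 1 else 0)" if k: "k \<le> n" for k
  proof -
    have "(\<Sum>j\<le>n. row0_weight n a b j / row0_norm n a b * gram_mat n a b $$ (j, k))
        = (\<Sum>j\<le>n. row0_weight n a b j * gram n a b j k) / row0_norm n a b"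
      using k by (simp add: gram_mat_def sum_divide_distrib)
    then show ?thesis using norm_pos weight_gram_first weight_gram_zero k by auto
  qed
  have "row0_weight n a b m / row0_norm n a b = coeff_mat n (dual_coeff n a b) $$ (0, m)"
    by (rule row_of_right_inverse[OF gram_mat_carrier coeff_mat_carrier dual_mat_inverse(2)[OF a b]
          solves le0 m])
  also have "\<dots> = dual_coeff n a b 0 (int m)" using m by (simp add: coeff_mat_def)
  finally show ?thesis
    unfolding row0_weight_def row0_norm_def using norm_pos pochhammer_shifted_pos
    by (simp add: Beta_commute field_simps)
qed

end

theorem theorem2p2:
  fixes n :: nat and \<alpha> \<beta> :: real
  assumes "\<alpha> > -1" and "\<beta> > -1"
  defines "\<sigma> \<equiv> \<alpha> + \<beta> + 1"
      and "c \<equiv> dual_coeff n \<alpha> \<beta>"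
      and "A \<equiv> (\<lambda>h::real. (h - real n) * (h + \<beta> + 1))"
      and "B \<equiv> (\<lambda>h::real. h * (h - real n - \<alpha> - 1))"
  shows "(\<forall>i j. 0 \<le> i \<and> i \<le> int n - 1 \<and> 0 \<le> j \<and> j \<le> int n \<longrightarrow>
            c (i + 1) j = (1 / A (of_int i)) *
              ((of_int (i - j)) * (2 * of_int i + 2 * of_int j - 2 * real n - \<alpha> + \<beta>) * c i j
               + B (of_int j) * c i (j - 1) + A (of_int j) * c i (j + 1)
               - B (of_int i) * c (i - 1) j))
       \<and> (\<forall>j::nat. j \<le> n \<longrightarrow>
            c 0 (int j) = pochhammer (\<sigma> + 1) n * pochhammer (\<beta> + 2) n / (fact n * Beta (\<alpha> + 1) (\<beta> + 1))
                 * ((-1) ^ j / (pochhammer (\<alpha> + 1) (n - j) * pochhammer (\<beta> + 2) j)))"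
proof -
  have A: "A = rec_A n \<beta>" and B: "B = rec_B n \<alpha>"
    unfolding A_def B_def rec_A_def rec_B_def by auto
  have \<sigma>: "\<sigma> + 1 = \<alpha> + \<beta> + 2" unfolding \<sigma>_def by simp
  show ?thesis
    unfolding c_def A B \<sigma>
    using dual_coeff_recurrence[OF assms(1,2)] dual_coeff_first_row[OF assms(1,2)] by blast
qed

end
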